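(* Let $X$ be an $X$-set parameter, let $G$ and $G'$ be graphs with no isolated vertices, and suppose $\varphi:\mathscr{X}^{\rm TAR}(G)\to\mathscr{X}^{\rm TAR}(G')$ is a graph isomorphism. Then $|\varphi(S)|=|S|$ for every $X$-set $S$ of $G$ if and only if there exists a bijection $\psi:V(G)\to V(G')$ such that $\psi(S)=\varphi(S)$ for every $X$-set $S$ of $G$ (where $\psi(S)=\{\psi(s):s\in S\}$).
   Context: All graphs are simple, finite, with nonempty vertex set. An $X$-set parameter is a graph parameter $X(G)$ defined as the minimum cardinality of an $X$-set of $G$, where the $X$-sets of each graph are subsets of its vertex set determined by some property satisfying: (1) supersets (within $V(G)$) of $X$-sets are $X$-sets; (2) the empty set is never an $X$-set; (3) an $X$-set of a disconnected graph is the union of an $X$-set of each component; (4) if $G$ has no isolated vertices, every set of $|V(G)|-1$ vertices is an $X$-set. The $X$-TAR graph $\mathscr{X}^{\rm TAR}(G)$ has as vertices all $X$-sets of $G$, with $S_1,S_2$ adjacent iff $|S_1\ominus S_2|=1$ (symmetric difference). *)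

theory Defs
  imports Main
begin

type_synonym 'v graph = "'v set \<times> 'v set set"

definition verts :: "'v graph \<Rightarrow> 'v set" where
  "verts G = fst G"

definition edges :: "'v graph \<Rightarrow> 'v set set" where
  "edges G = snd G"

definition graph :: "'v graph \<Rightarrow> bool" where
  "graph G \<longleftrightarrow> finite (verts G) \<and> verts G \<noteq> {} \<and>
     (\<forall>e \<in> edges G. e \<subseteq> verts G \<and> card e = 2)"

definition adj :: "'v graph \<Rightarrow> 'v \<Rightarrow> 'v \<Rightarrow> bool" where
  "adj G u v \<longleftrightarrow> {u, v} \<in> edges G"

definition no_isolated :: "'v graph \<Rightarrow> bool" where
  "no_isolated G \<longleftrightarrow> (\<forall>v \<in> verts G. \<exists>u. adj G v u)"

definition reachable :: "'v graph \<Rightarrow> 'v \<Rightarrow> 'v \<Rightarrow> bool" where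
  "reachable G u v \<longleftrightarrow> u \<in> verts G \<and> (adj G)\<^sup>*\<^sup>* u v"

definition components :: "'v graph \<Rightarrow> 'v set set" where
  "components G = {{w. reachable G v w} | v. v \<in> verts G}"

definition connected_graph :: "'v graph \<Rightarrow> bool" where
  "connected_graph G \<longleftrightarrow> (\<forall>u \<in> verts G. \<forall>v \<in> verts G. reachable G u v)"

definition induced :: "'v graph \<Rightarrow> 'v set \<Rightarrow> 'v graph" where
  "induced G C = (C, {e \<in> edges G. e \<subseteq> C})"

definition X_set_parameter :: "('v graph \<Rightarrow> 'v set set) \<Rightarrow> bool" where
  "X_set_parameter Xs \<longleftrightarrow>
     (\<forall>G. graph G \<longrightarrow>
        Xs G \<subseteq> Pow (verts G) \<and>
        (\<forall>S T. S \<in> Xs G \<and> S \<subseteq> T \<and> T \<subseteq> verts G \<longrightarrow> T \<in> Xs G) \<and>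
        {} \<notin> Xs G \<and>
        (\<not> connected_graph G \<longrightarrow>
           (\<forall>S. S \<in> Xs G \<longleftrightarrow>
              (\<exists>f. (\<forall>C \<in> components G. f C \<in> Xs (induced G C)) \<and>
                   S = \<Union> (f ` components G)))) \<and>
        (no_isolated G \<longrightarrow>
           (\<forall>S. S \<subseteq> verts G \<and> card S = card (verts G) - 1 \<longrightarrow> S \<in> Xs G)))"

definition tar_adj :: "'v set \<Rightarrow> 'v set \<Rightarrow> bool" where
  "tar_adj S1 S2 \<longleftrightarrow> card ((S1 - S2) \<union> (S2 - S1)) = 1"

definition tar_iso :: "('v graph \<Rightarrow> 'v set set) \<Rightarrow> 'v graph \<Rightarrow> 'v graph
     \<Rightarrow> ('v set \<Rightarrow> 'v set) \<Rightarrow> bool" where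
  "tar_iso Xs G G' \<phi> \<longleftrightarrow> bij_betw \<phi> (Xs G) (Xs G') \<and>
     (\<forall>S1 \<in> Xs G. \<forall>S2 \<in> Xs G. tar_adj S1 S2 \<longleftrightarrow> tar_adj (\<phi> S1) (\<phi> S2))"

end

theory Submission
  imports Defs
begin

text \<open>Without isolated vertices every \<open>V - {v}\<close> is an X-set. A card-preserving TAR
isomorphism \<open>\<phi>\<close> must send \<open>V\<close> to \<open>V'\<close>, hence each \<open>V - {v}\<close> to a TAR
neighbour of \<open>V'\<close> of size \<open>|V'| - 1\<close>, i.e. to some \<open>V' - {\<psi> v}\<close>; this
defines the bijection \<open>\<psi>\<close>. Then \<open>\<psi> S = \<phi> S\<close> by downward induction on \<open>|S|\<close>:
for vertices \<open>x \<noteq> w\<close> outside \<open>S\<close>, the X-sets \<open>S + x\<close> and \<open>S + w\<close> are TAR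
neighbours of \<open>S\<close>, so \<open>\<phi> S\<close> lies in \<open>\<phi>(S + x) \<inter> \<phi>(S + w) = \<psi> S\<close>, a set of
the same size.\<close>

lemma tar_adj_insert: "x \<notin> S \<Longrightarrow> tar_adj (insert x S) S"
proof -
  assume "x \<notin> S"
  then have "(insert x S - S) \<union> (S - insert x S) = {x}" by blast
  then show ?thesis unfolding tar_adj_def by simp
qed

lemma tar_adj_card_less_obtains_remove:
  assumes "finite B" and "tar_adj A B" and "card B < card A"
  obtains y where "y \<in> A" and "B = A - {y}"
proof -
  obtain y where y: "(A - B) \<union> (B - A) = {y}"
    using assms(2) unfolding tar_adj_def by (rule card_1_singletonE)
  have "\<not> A \<subseteq> B" using assms(1,3) card_mono leD by blast
  then obtain a where "a \<in> A" and "a \<notin> B" by blast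
  with y have "y \<in> A" by (metis DiffI UnI1 singletonD)
  moreover from y this have "B = A - {y}" by (auto simp: set_eq_iff)
  ultimately show thesis by (rule that)
qed

lemma
  assumes "X_set_parameter Xs" and "graph G"
  shows X_set_subset_verts: "S \<in> Xs G \<Longrightarrow> S \<subseteq> verts G"
    and X_set_superset: "S \<in> Xs G \<Longrightarrow> S \<subseteq> T \<Longrightarrow> T \<subseteq> verts G \<Longrightarrow> T \<in> Xs G"
    and X_set_card_verts_minus_one:
      "no_isolated G \<Longrightarrow> S \<subseteq> verts G \<Longrightarrow> card S = card (verts G) - 1 \<Longrightarrow> S \<in> Xs G"
proof -
  note axioms = assms(1)[unfolded X_set_parameter_def, rule_format, OF assms(2)]
  show "S \<in> Xs G \<Longrightarrow> S \<subseteq> verts G"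
    using axioms[THEN conjunct1] by blast
  show "S \<in> Xs G \<Longrightarrow> S \<subseteq> T \<Longrightarrow> T \<subseteq> verts G \<Longrightarrow> T \<in> Xs G"
    using axioms[THEN conjunct2, THEN conjunct1] by blast
  show "no_isolated G \<Longrightarrow> S \<subseteq> verts G \<Longrightarrow> card S = card (verts G) - 1 \<Longrightarrow> S \<in> Xs G"
    using axioms[THEN conjunct2, THEN conjunct2, THEN conjunct2, THEN conjunct2] by blast
qed

lemma X_set_verts_remove:
  assumes "X_set_parameter Xs" and "graph G" and "no_isolated G" and "v \<in> verts G"
  shows "verts G - {v} \<in> Xs G"
  using X_set_card_verts_minus_one[OF assms(1-3)] assms(2,4) by (simp add: graph_def)

lemma X_set_verts:
  assumes "X_set_parameter Xs" and "graph G" and "no_isolated G"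
  shows "verts G \<in> Xs G"
proof -
  have "verts G \<noteq> {}" using assms(2) by (simp add: graph_def)
  then obtain v where "v \<in> verts G" by blast
  then have "verts G - {v} \<in> Xs G" by (rule X_set_verts_remove[OF assms])
  then show ?thesis by (rule X_set_superset[OF assms(1,2)]) blast+
qed

locale card_preserving_tar_iso =
  fixes V :: "'a set" and F :: "'a set set"
    and V' :: "'b set" and F' :: "'b set set"
    and \<phi> :: "'a set \<Rightarrow> 'b set"
  assumes finite_V: "finite V"
    and F_subset: "F \<subseteq> Pow V"
    and V_in_F: "V \<in> F"
    and remove_in_F: "v \<in> V \<Longrightarrow> V - {v} \<in> F"
    and F_upward: "S \<in> F \<Longrightarrow> S \<subseteq> T \<Longrightarrow> T \<subseteq> V \<Longrightarrow> T \<in> F"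
    and finite_V': "finite V'"
    and F'_subset: "F' \<subseteq> Pow V'"
    and V'_in_F': "V' \<in> F'"
    and bij_phi: "bij_betw \<phi> F F'"
    and phi_tar_adj: "S1 \<in> F \<Longrightarrow> S2 \<in> F \<Longrightarrow> tar_adj S1 S2 \<Longrightarrow> tar_adj (\<phi> S1) (\<phi> S2)"
    and card_phi: "S \<in> F \<Longrightarrow> card (\<phi> S) = card S"
begin

lemma phi_subset: "S \<in> F \<Longrightarrow> \<phi> S \<subseteq> V'"
  using bij_betw_apply[OF bij_phi] F'_subset by blast

lemma finite_phi: "S \<in> F \<Longrightarrow> finite (\<phi> S)"
  using phi_subset finite_V' finite_subset by blast

lemma card_verts_eq: "card V' = card V"
proof (rule antisym)
  obtain S where S: "S \<in> F" "\<phi> S = V'"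
    using V'_in_F' bij_phi by (auto simp: bij_betw_def)
  then have "card V' = card S" using card_phi by metis
  also have "\<dots> \<le> card V" using S(1) F_subset finite_V by (auto intro: card_mono)
  finally show "card V' \<le> card V" .
  have "card V = card (\<phi> V)" using card_phi V_in_F by simp
  also have "\<dots> \<le> card V'" using card_mono finite_V' phi_subset V_in_F by blast
  finally show "card V \<le> card V'" .
qed

lemma phi_verts: "\<phi> V = V'"
  using card_subset_eq finite_V' phi_subset V_in_F card_phi card_verts_eq by metis

lemma phi_verts_remove: "v \<in> V \<Longrightarrow> \<exists>y \<in> V'. \<phi> (V - {v}) = V' - {y}"
proof -
  assume v: "v \<in> V"
  have "tar_adj V (V - {v})" using tar_adj_insert[of v "V - {v}"] v by (simp add: insert_absorb)
  then have "tar_adj V' (\<phi> (V - {v}))" using phi_tar_adj V_in_F remove_in_F v phi_verts by metis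
  moreover have "card (\<phi> (V - {v})) < card V'"
  proof -
    have "card (\<phi> (V - {v})) = card V - 1" using card_phi remove_in_F v finite_V by simp
    moreover have "card V > 0" using v finite_V card_gt_0_iff by blast
    ultimately show ?thesis using card_verts_eq by simp
  qed
  ultimately show ?thesis
    using tar_adj_card_less_obtains_remove finite_phi remove_in_F v by metis
qed

definition vertex_map :: "'a \<Rightarrow> 'b" where
  "vertex_map v = (SOME y. y \<in> V' \<and> \<phi> (V - {v}) = V' - {y})"

lemma vertex_map:
  assumes "v \<in> V"
  shows "vertex_map v \<in> V'" and "\<phi> (V - {v}) = V' - {vertex_map v}"
proof -
  have "\<exists>y. y \<in> V' \<and> \<phi> (V - {v}) = V' - {y}" using phi_verts_remove[OF assms] by blast
  then have "vertex_map v \<in> V' \<and> \<phi> (V - {v}) = V' - {vertex_map v}"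
    unfolding vertex_map_def by (rule someI_ex)
  then show "vertex_map v \<in> V'" and "\<phi> (V - {v}) = V' - {vertex_map v}" by simp_all
qed

lemma inj_on_vertex_map: "inj_on vertex_map V"
proof (rule inj_onI)
  fix u v assume u: "u \<in> V" and v: "v \<in> V" and "vertex_map u = vertex_map v"
  then have "\<phi> (V - {u}) = \<phi> (V - {v})" using u v by (simp add: vertex_map(2))
  then have "V - {u} = V - {v}"
    using bij_betw_imp_inj_on[OF bij_phi] remove_in_F u v inj_onD by metis
  then show "u = v" using u by blast
qed

lemma bij_betw_vertex_map: "bij_betw vertex_map V V'"
proof -
  have "vertex_map ` V \<subseteq> V'" using vertex_map(1) by (rule image_subsetI)
  then have "vertex_map ` V = V'"
    using card_subset_eq[OF finite_V'] card_image[OF inj_on_vertex_map] card_verts_eq by metis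
  then show ?thesis using inj_on_vertex_map by (simp add: bij_betw_def)
qed

lemma phi_subset_of_insert:
  assumes S: "S \<in> F" and z: "z \<in> V - S"
    and IH: "vertex_map ` insert z S = \<phi> (insert z S)"
  shows "\<phi> S \<subseteq> vertex_map ` insert z S"
proof -
  have zS: "insert z S \<in> F" using F_upward S z F_subset by blast
  have "finite S" using S F_subset finite_V finite_subset by blast
  moreover have "z \<notin> S" using z by simp
  ultimately have "card (\<phi> S) < card (\<phi> (insert z S))"
    using card_phi[OF S] card_phi[OF zS] by simp
  moreover have "tar_adj (\<phi> (insert z S)) (\<phi> S)"
    by (rule phi_tar_adj[OF zS S tar_adj_insert[OF \<open>z \<notin> S\<close>]])
  ultimately obtain y where "\<phi> S = \<phi> (insert z S) - {y}"
    using tar_adj_card_less_obtains_remove[OF finite_phi[OF S]] by metis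
  then show ?thesis using IH by blast
qed

lemma vertex_map_image_eq_phi: "S \<in> F \<Longrightarrow> vertex_map ` S = \<phi> S"
proof (induction "card (V - S)" arbitrary: S rule: less_induct)
  case less
  have SV: "S \<subseteq> V" using less.prems F_subset by blast
  have IH: "vertex_map ` insert z S = \<phi> (insert z S)" if "z \<in> V - S" for z
  proof (rule less.hyps)
    show "card (V - insert z S) < card (V - S)"
      using that finite_V by (metis Diff_insert card_Diff1_less finite_Diff)
    show "insert z S \<in> F" using F_upward less.prems that SV by blast
  qed
  consider "V - S = {}" | x where "V - S = {x}" | x w where "x \<in> V - S" "w \<in> V - S" "x \<noteq> w"
    by (metis all_not_in_conv insertI1 subset_singletonD subsetI)
  then show ?case
  proof cases
    case 1
    then have "S = V" using SV by blast
    then show ?thesis using bij_betw_vertex_map phi_verts by (simp add: bij_betw_def)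
  next
    case (2 x)
    then have "S = V - {x}" and x: "x \<in> V" using SV by blast+
    moreover have "vertex_map ` (V - {x}) = V' - {vertex_map x}"
      using inj_on_vertex_map x bij_betw_imp_surj_on[OF bij_betw_vertex_map]
      by (simp add: inj_on_image_set_diff)
    ultimately show ?thesis using vertex_map(2) by simp
  next
    case (3 x w)
    have "vertex_map x \<noteq> vertex_map w"
      using 3 inj_on_vertex_map by (metis DiffD1 inj_on_eq_iff)
    moreover have "\<phi> S \<subseteq> insert (vertex_map x) (vertex_map ` S)"
      using phi_subset_of_insert[OF less.prems 3(1) IH[OF 3(1)]] by simp
    moreover have "\<phi> S \<subseteq> insert (vertex_map w) (vertex_map ` S)"
      using phi_subset_of_insert[OF less.prems 3(2) IH[OF 3(2)]] by simp
    ultimately have "\<phi> S \<subseteq> vertex_map ` S" by blast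
    moreover have "card (vertex_map ` S) = card (\<phi> S)"
      using card_image inj_on_subset[OF inj_on_vertex_map SV] card_phi less.prems by metis
    moreover have "finite (vertex_map ` S)" using SV finite_V finite_subset by blast
    ultimately show ?thesis using card_subset_eq by metis
  qed
qed

end

lemma card_preserving_tar_iso_X_sets:
  assumes "X_set_parameter Xs"
    and "graph G" and "graph G'"
    and "no_isolated G" and "no_isolated G'"
    and "tar_iso Xs G G' \<phi>"
    and "\<forall>S \<in> Xs G. card (\<phi> S) = card S"
  shows "card_preserving_tar_iso (verts G) (Xs G) (verts G') (Xs G') \<phi>"
proof
  show "finite (verts G)" and "finite (verts G')" using assms(2,3) by (simp_all add: graph_def)
  show "Xs G \<subseteq> Pow (verts G)" and "Xs G' \<subseteq> Pow (verts G')"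
    using X_set_subset_verts[OF assms(1,2)] X_set_subset_verts[OF assms(1,3)] by blast+
  show "verts G \<in> Xs G" and "verts G' \<in> Xs G'"
    using X_set_verts[OF assms(1,2,4)] X_set_verts[OF assms(1,3,5)] .
  show "v \<in> verts G \<Longrightarrow> verts G - {v} \<in> Xs G" for v
    by (rule X_set_verts_remove[OF assms(1,2,4)])
  show "S \<in> Xs G \<Longrightarrow> S \<subseteq> T \<Longrightarrow> T \<subseteq> verts G \<Longrightarrow> T \<in> Xs G" for S T
    by (rule X_set_superset[OF assms(1,2)])
  show "bij_betw \<phi> (Xs G) (Xs G')"
    and "S1 \<in> Xs G \<Longrightarrow> S2 \<in> Xs G \<Longrightarrow> tar_adj S1 S2 \<Longrightarrow> tar_adj (\<phi> S1) (\<phi> S2)" for S1 S2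
    using assms(6) by (auto simp: tar_iso_def)
  show "S \<in> Xs G \<Longrightarrow> card (\<phi> S) = card S" for S
    using assms(7) by blast
qed

theorem theorem2p12:
  fixes Xs :: "'v graph \<Rightarrow> 'v set set"
    and G G' :: "'v graph"
    and \<phi> :: "'v set \<Rightarrow> 'v set"
  assumes "X_set_parameter Xs"
    and "graph G" and "graph G'"
    and "no_isolated G" and "no_isolated G'"
    and "tar_iso Xs G G' \<phi>"
  shows "(\<forall>S \<in> Xs G. card (\<phi> S) = card S) \<longleftrightarrow>
         (\<exists>\<psi>. bij_betw \<psi> (verts G) (verts G') \<and> (\<forall>S \<in> Xs G. \<psi> ` S = \<phi> S))"
proof
  assume "\<forall>S \<in> Xs G. card (\<phi> S) = card S"
  then interpret card_preserving_tar_iso "verts G" "Xs G" "verts G'" "Xs G'" \<phi>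
    by (rule card_preserving_tar_iso_X_sets[OF assms])
  show "\<exists>\<psi>. bij_betw \<psi> (verts G) (verts G') \<and> (\<forall>S \<in> Xs G. \<psi> ` S = \<phi> S)"
    using bij_betw_vertex_map vertex_map_image_eq_phi by blast
next
  assume "\<exists>\<psi>. bij_betw \<psi> (verts G) (verts G') \<and> (\<forall>S \<in> Xs G. \<psi> ` S = \<phi> S)"
  then obtain \<psi> where \<psi>: "bij_betw \<psi> (verts G) (verts G')" "\<forall>S \<in> Xs G. \<psi> ` S = \<phi> S"
    by blast
  show "\<forall>S \<in> Xs G. card (\<phi> S) = card S"
  proof
    fix S assume S: "S \<in> Xs G"
    have "inj_on \<psi> S"
      using inj_on_subset[OF bij_betw_imp_inj_on[OF \<psi>(1)] X_set_subset_verts[OF assms(1,2) S]] .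
    then have "card (\<psi> ` S) = card S" by (rule card_image)
    then show "card (\<phi> S) = card S" using \<psi>(2) S by simp
  qed
qed

end
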